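(* Fix a treatment group (age at first birth) $d$, a post-treatment target age $a$, and a control group $d'$ with $d' > a \ge d$. Suppose the No Anticipation assumption holds for both genders $g\in\{f,m\}$ and both groups $d$ and $d'$, and suppose the Equal Difference in Normalized Trends assumption holds: $$\frac{\gamma_{\mathrm{PT}}(f,d,d',a)}{APO(f,d,\infty,a)}=\frac{\gamma_{\mathrm{PT}}(m,d,d',a)}{APO(m,d,\infty,a)}.$$ Then $$\delta_\theta(f,d,d',a)-\delta_\theta(m,d,d',a)=\mathrm{Bias}(d,d',a)\,\big[\theta(f,d,a)-\theta(m,d,a)\big],$$ where $$\mathrm{Bias}(d,d',a)=\frac{APO(f,d,\infty,a)}{APO(f,d,\infty,a)-\gamma_{\mathrm{PT}}(f,d,d',a)}=\frac{APO(m,d,\infty,a)}{APO(m,d,\infty,a)-\gamma_{\mathrm{PT}}(m,d,d',a)}$$ (in particular, the two expressions for $\mathrm{Bias}(d,d',a)$ are equal).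
   Context: Population of individuals with gender $G\in\{f,m\}$ and age at first childbirth $D$ (with $D=\infty$ meaning never). For each age $a$ and each (possibly counterfactual) first-birth age $d'\in\mathbb{N}\cup\{\infty\}$ there is a potential outcome (earnings) $Y_a(d')$; observed earnings satisfy consistency $Y_a=Y_a(D)$. Define $APO(g,d,d',a)=\mathbb{E}[Y_a(d')\mid G=g,D=d]$, $ATE(g,d,a)=APO(g,d,d,a)-APO(g,d,\infty,a)$, and $\theta(g,d,a)=ATE(g,d,a)/APO(g,d,\infty,a)$. Descriptive quantities: $\delta_{\mathrm{APO}}(g,d,d',a)=\mathbb{E}[Y_{d-1}\mid G=g,D=d]+\mathbb{E}[Y_a-Y_{d-1}\mid G=g,D=d']$, $\delta_{\mathrm{ATE}}(g,d,d',a)=\mathbb{E}[Y_a\mid G=g,D=d]-\delta_{\mathrm{APO}}(g,d,d',a)$, $\delta_\theta(g,d,d',a)=\delta_{\mathrm{ATE}}(g,d,d',a)/\delta_{\mathrm{APO}}(g,d,d',a)$. Parallel-trends violation: $\gamma_{\mathrm{PT}}(g,d,d',a)=APO(g,d,\infty,a)-APO(g,d,\infty,d-1)-[APO(g,d',\infty,a)-APO(g,d',\infty,d-1)]$. No Anticipation for gender $g$ and group $d$: $APO(g,d,d,b)=APO(g,d,\infty,b)$ for every age $b<d$. All denominators appearing are assumed nonzero. *)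

theory Defs
  imports "HOL-Probability.Probability" "HOL-Library.Extended_Nat"
begin

datatype gender = Fem | Mal

text \<open>Model: probability space M of individuals; G gender, D age at first birth
  (enat, with \<infinity> meaning never), Y a e = potential earnings at age a under first-birth age e.\<close>

definition cexp :: "'i measure \<Rightarrow> ('i \<Rightarrow> real) \<Rightarrow> ('i \<Rightarrow> bool) \<Rightarrow> real" where
  "cexp M X A = (\<integral>x. indicator {x \<in> space M. A x} x * X x \<partial>M) / measure M {x \<in> space M. A x}"

definition Yobs :: "(nat \<Rightarrow> enat \<Rightarrow> 'i \<Rightarrow> real) \<Rightarrow> ('i \<Rightarrow> enat) \<Rightarrow> nat \<Rightarrow> 'i \<Rightarrow> real" where
  "Yobs Y D a i = Y a (D i) i"

definition APO :: "'i measure \<Rightarrow> ('i \<Rightarrow> gender) \<Rightarrow> ('i \<Rightarrow> enat) \<Rightarrow> (nat \<Rightarrow> enat \<Rightarrow> 'i \<Rightarrow> real)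
    \<Rightarrow> gender \<Rightarrow> enat \<Rightarrow> enat \<Rightarrow> nat \<Rightarrow> real" where
  "APO M G D Y g d d' a = cexp M (Y a d') (\<lambda>i. G i = g \<and> D i = d)"

definition ATE where
  "ATE M G D Y g d a = APO M G D Y g d d a - APO M G D Y g d \<infinity> a"

definition theta where
  "theta M G D Y g d a = ATE M G D Y g d a / APO M G D Y g d \<infinity> a"

definition delta_APO :: "'i measure \<Rightarrow> ('i \<Rightarrow> gender) \<Rightarrow> ('i \<Rightarrow> enat) \<Rightarrow> (nat \<Rightarrow> enat \<Rightarrow> 'i \<Rightarrow> real)
    \<Rightarrow> gender \<Rightarrow> nat \<Rightarrow> enat \<Rightarrow> nat \<Rightarrow> real" where
  "delta_APO M G D Y g d d' a =
     cexp M (Yobs Y D (d - 1)) (\<lambda>i. G i = g \<and> D i = enat d)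
   + cexp M (\<lambda>i. Yobs Y D a i - Yobs Y D (d - 1) i) (\<lambda>i. G i = g \<and> D i = d')"

definition delta_ATE where
  "delta_ATE M G D Y g d d' a =
     cexp M (Yobs Y D a) (\<lambda>i. G i = g \<and> D i = enat d) - delta_APO M G D Y g d d' a"

definition delta_theta where
  "delta_theta M G D Y g d d' a = delta_ATE M G D Y g d d' a / delta_APO M G D Y g d d' a"

definition gamma_PT :: "'i measure \<Rightarrow> ('i \<Rightarrow> gender) \<Rightarrow> ('i \<Rightarrow> enat) \<Rightarrow> (nat \<Rightarrow> enat \<Rightarrow> 'i \<Rightarrow> real)
    \<Rightarrow> gender \<Rightarrow> nat \<Rightarrow> enat \<Rightarrow> nat \<Rightarrow> real" where
  "gamma_PT M G D Y g d d' a =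
     APO M G D Y g (enat d) \<infinity> a - APO M G D Y g (enat d) \<infinity> (d - 1)
     - (APO M G D Y g d' \<infinity> a - APO M G D Y g d' \<infinity> (d - 1))"

definition no_anticipation where
  "no_anticipation M G D Y g d \<longleftrightarrow> (\<forall>b::nat. enat b < d \<longrightarrow> APO M G D Y g d d b = APO M G D Y g d \<infinity> b)"

definition Bias where
  "Bias M G D Y d d' a = APO M G D Y Fem (enat d) \<infinity> a
      / (APO M G D Y Fem (enat d) \<infinity> a - gamma_PT M G D Y Fem d d' a)"

end

theory Submission
  imports Defs
begin

text \<open>Under No Anticipation the descriptive baseline \<open>\<delta>\<^sub>A\<^sub>P\<^sub>O\<close> is the true baseline
  \<open>APO(g,d,\<infinity>,a)\<close> shifted by the parallel-trends violation \<open>\<gamma>\<^sub>P\<^sub>T\<close>. Writing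
  \<open>B = APO / (APO - \<gamma>\<^sub>P\<^sub>T)\<close>, this gives \<open>\<delta>\<^sub>\<theta> = B \<theta> + (B - 1)\<close> for each gender. Since
  \<open>B = 1 / (1 - \<gamma>\<^sub>P\<^sub>T / APO)\<close>, Equal Difference in Normalized Trends says exactly that
  both genders share the same \<open>B\<close>, and the affine terms cancel in the difference.\<close>

lemma cexp_cong:
  assumes "\<And>i. i \<in> space M \<Longrightarrow> A i \<Longrightarrow> X i = Z i"
  shows "cexp M X A = cexp M Z A"
  unfolding cexp_def using assms
  by (intro arg_cong2[where f = "(/)"] Bochner_Integration.integral_cong) (auto simp: indicator_def)

lemma cexp_diff:
  assumes "{x \<in> space M. A x} \<in> sets M" and "integrable M X" and "integrable M Z"
  shows "cexp M (\<lambda>i. X i - Z i) A = cexp M X A - cexp M Z A"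
proof -
  let ?S = "{x \<in> space M. A x}"
  have "(\<integral>x. indicator ?S x * (X x - Z x) \<partial>M)
      = (\<integral>x. indicator ?S x * X x \<partial>M) - (\<integral>x. indicator ?S x * Z x \<partial>M)"
    using integrable_mult_indicator[OF assms(1) assms(2)] integrable_mult_indicator[OF assms(1) assms(3)]
    by (simp add: right_diff_distrib)
  then show ?thesis
    unfolding cexp_def by (simp add: diff_divide_distrib)
qed

lemma cexp_Yobs_group:
  "cexp M (Yobs Y D b) (\<lambda>i. G i = g \<and> D i = e) = APO M G D Y g e e b"
  unfolding APO_def by (rule cexp_cong) (simp add: Yobs_def)

lemma cexp_Yobs_diff_group:
  assumes "{x \<in> space M. G x = g \<and> D x = e} \<in> sets M" and "\<And>b. integrable M (Y b e)"
  shows "cexp M (\<lambda>i. Yobs Y D a i - Yobs Y D c i) (\<lambda>i. G i = g \<and> D i = e)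
       = APO M G D Y g e e a - APO M G D Y g e e c"
proof -
  have "cexp M (\<lambda>i. Yobs Y D a i - Yobs Y D c i) (\<lambda>i. G i = g \<and> D i = e)
      = cexp M (\<lambda>i. Y a e i - Y c e i) (\<lambda>i. G i = g \<and> D i = e)"
    by (rule cexp_cong) (simp add: Yobs_def)
  also have "\<dots> = APO M G D Y g e e a - APO M G D Y g e e c"
    unfolding APO_def using assms(1) assms(2) assms(2) by (rule cexp_diff)
  finally show ?thesis .
qed

lemma no_anticipationD:
  "no_anticipation M G D Y g e \<Longrightarrow> enat b < e \<Longrightarrow> APO M G D Y g e e b = APO M G D Y g e \<infinity> b"
  unfolding no_anticipation_def by blast

lemma delta_APO_eq_APO_minus_gamma_PT:
  assumes "{x \<in> space M. G x = g \<and> D x = d'} \<in> sets M" and "\<And>b. integrable M (Y b d')"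
    and "d \<ge> 1" and "d \<le> a" and "enat a < d'"
    and "no_anticipation M G D Y g (enat d)" and "no_anticipation M G D Y g d'"
  shows "delta_APO M G D Y g d d' a = APO M G D Y g (enat d) \<infinity> a - gamma_PT M G D Y g d d' a"
proof -
  have "enat (d - 1) < enat d" using \<open>d \<ge> 1\<close> by simp
  moreover have "enat (d - 1) < d'"
    using \<open>d \<le> a\<close> \<open>enat a < d'\<close> by (meson diff_le_self enat_ord_simps(1) le_less_trans order_trans)
  ultimately have "APO M G D Y g (enat d) (enat d) (d - 1) = APO M G D Y g (enat d) \<infinity> (d - 1)"
    and "APO M G D Y g d' d' (d - 1) = APO M G D Y g d' \<infinity> (d - 1)"
    and "APO M G D Y g d' d' a = APO M G D Y g d' \<infinity> a"
    using assms(5-7) by (simp_all add: no_anticipationD)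
  then show ?thesis
    unfolding delta_APO_def gamma_PT_def cexp_Yobs_group cexp_Yobs_diff_group[where Y = Y, OF assms(1,2)]
    by simp
qed

lemma ratio_over_shifted_eq:
  fixes A \<gamma> :: real
  assumes "A \<noteq> 0"
  shows "A / (A - \<gamma>) = 1 / (1 - \<gamma> / A)"
  using assms by (simp add: field_simps)

lemma shifted_ratio_affine:
  fixes A \<gamma> T :: real
  assumes "A \<noteq> 0"
  shows "T / (A - \<gamma>) - 1 = A / (A - \<gamma>) * (T / A - 1) + (A / (A - \<gamma>) - 1)"
proof -
  have "A / (A - \<gamma>) * (T / A) = T / (A - \<gamma>)"
    using assms by simp
  then show ?thesis
    by (simp add: right_diff_distrib)
qed

lemma delta_theta_eq_affine_theta:
  assumes "{x \<in> space M. G x = g \<and> D x = d'} \<in> sets M" and "\<And>b. integrable M (Y b d')"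
    and "d \<ge> 1" and "d \<le> a" and "enat a < d'"
    and "no_anticipation M G D Y g (enat d)" and "no_anticipation M G D Y g d'"
    and "APO M G D Y g (enat d) \<infinity> a \<noteq> 0"
    and "APO M G D Y g (enat d) \<infinity> a - gamma_PT M G D Y g d d' a \<noteq> 0"
  defines "B \<equiv> APO M G D Y g (enat d) \<infinity> a / (APO M G D Y g (enat d) \<infinity> a - gamma_PT M G D Y g d d' a)"
  shows "delta_theta M G D Y g d d' a = B * theta M G D Y g (enat d) a + (B - 1)"
proof -
  have "delta_theta M G D Y g d d' a
      = APO M G D Y g (enat d) (enat d) a / (APO M G D Y g (enat d) \<infinity> a - gamma_PT M G D Y g d d' a) - 1"
    using assms(9)
    unfolding delta_theta_def delta_ATE_def delta_APO_eq_APO_minus_gamma_PT[OF assms(1-7)] cexp_Yobs_group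
    by (simp add: diff_divide_distrib)
  also have "\<dots> = B * theta M G D Y g (enat d) a + (B - 1)"
    unfolding B_def theta_def ATE_def diff_divide_distrib divide_self[OF assms(8)]
    using assms(8) by (rule shifted_ratio_affine)
  finally show ?thesis .
qed

theorem theorem1:
  fixes M :: "'i measure" and G :: "'i \<Rightarrow> gender" and D :: "'i \<Rightarrow> enat"
    and Y :: "nat \<Rightarrow> enat \<Rightarrow> 'i \<Rightarrow> real"
    and d a :: nat and d' :: enat
  assumes "prob_space M"
    and "\<And>g e. {x \<in> space M. G x = g \<and> D x = e} \<in> sets M"
    and "\<And>b e. integrable M (Y b e)"
    and "d \<ge> 1" and "d \<le> a" and "enat a < d'"
    and "\<And>g. no_anticipation M G D Y g (enat d)"
    and "\<And>g. no_anticipation M G D Y g d'"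
    and "gamma_PT M G D Y Fem d d' a / APO M G D Y Fem (enat d) \<infinity> a
         = gamma_PT M G D Y Mal d d' a / APO M G D Y Mal (enat d) \<infinity> a"
    and "\<And>g. APO M G D Y g (enat d) \<infinity> a \<noteq> 0"
    and "\<And>g. delta_APO M G D Y g d d' a \<noteq> 0"
    and "\<And>g. APO M G D Y g (enat d) \<infinity> a - gamma_PT M G D Y g d d' a \<noteq> 0"
  shows "delta_theta M G D Y Fem d d' a - delta_theta M G D Y Mal d d' a
           = Bias M G D Y d d' a * (theta M G D Y Fem (enat d) a - theta M G D Y Mal (enat d) a)
         \<and> Bias M G D Y d d' a = APO M G D Y Mal (enat d) \<infinity> a
              / (APO M G D Y Mal (enat d) \<infinity> a - gamma_PT M G D Y Mal d d' a)"
proof -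
  define B where "B g = APO M G D Y g (enat d) \<infinity> a
                          / (APO M G D Y g (enat d) \<infinity> a - gamma_PT M G D Y g d d' a)" for g
  have delta_theta: "delta_theta M G D Y g d d' a = B g * theta M G D Y g (enat d) a + (B g - 1)" for g
    unfolding B_def using assms(2-8,10,12) by (intro delta_theta_eq_affine_theta) auto
  have "B Fem = B Mal"
    unfolding B_def ratio_over_shifted_eq[OF assms(10)] assms(9) ..
  moreover have "Bias M G D Y d d' a = B Fem"
    unfolding Bias_def B_def ..
  ultimately show ?thesis
    unfolding delta_theta by (simp add: B_def right_diff_distrib)
qed

end
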